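(* Let $m\ge 2$, $n\ge 1$, and let $\overrightarrow{K_{1,n}}$ be an orientation of the star $K_{1,n}$. Let $m\overrightarrow{K_{1,n}}$ be the disjoint union of $m$ copies of $\overrightarrow{K_{1,n}}$. Then $m\overrightarrow{K_{1,n}}$ is $\{0,2\}$-antimagic and $\{0,1,2\}$-antimagic if and only if each center is neither a sink nor a source.
   Context: The center of a star $K_{1,n}$ is its vertex of degree $n$ (for $n=1$, either vertex); a source is a vertex of in-degree $0$ and a sink a vertex of out-degree $0$. In an oriented graph $\overrightarrow{G}$, $d(u,v)$ is the length of a shortest directed path from $u$ to $v$ ($d(u,u)=0$, $d(u,v)=\infty$ if there is none). Let $\partial=\max\{d(u,v)<\infty : u,v\in V(\overrightarrow{G})\}$. A distance set is a nonempty $D\subseteq\{0,1,\dots,\partial\}$. The $D$-neighborhood of $u$ is $N_D(u)=\{v : d(u,v)\in D\}$. For a bijection $f:V(\overrightarrow{G})\to\{1,\dots,|V(\overrightarrow{G})|\}$, the $D$-weight of $u$ is $\omega_D(u)=\sum_{v\in N_D(u)} f(v)$. $\overrightarrow{G}$ is $D$-antimagic if $D\subseteq\{0,\dots,\partial\}$ (so $\{0,2\}$- or $\{0,1,2\}$-antimagic requires $\partial\ge 2$) and there is such a bijection $f$ with all $D$-weights pairwise distinct. *)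

theory Defs
  imports Main
begin

text \<open>Directed walks of length k from u to v correspond to (u,v) \<in> A ^^ k;
  the shortest walk length equals the shortest path length.\<close>

definition has_dist :: "('a \<times> 'a) set \<Rightarrow> 'a \<Rightarrow> 'a \<Rightarrow> nat \<Rightarrow> bool" where
  "has_dist A u v k \<longleftrightarrow> (u, v) \<in> A ^^ k \<and> (\<forall>j<k. (u, v) \<notin> A ^^ j)"

definition max_dist :: "'a set \<Rightarrow> ('a \<times> 'a) set \<Rightarrow> nat" where
  "max_dist V A = Max {k. \<exists>u\<in>V. \<exists>v\<in>V. has_dist A u v k}"

definition D_nbhd :: "'a set \<Rightarrow> ('a \<times> 'a) set \<Rightarrow> nat set \<Rightarrow> 'a \<Rightarrow> 'a set" where
  "D_nbhd V A D u = {v \<in> V. \<exists>k\<in>D. has_dist A u v k}"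

definition D_weight :: "'a set \<Rightarrow> ('a \<times> 'a) set \<Rightarrow> nat set \<Rightarrow> ('a \<Rightarrow> nat) \<Rightarrow> 'a \<Rightarrow> nat" where
  "D_weight V A D f u = (\<Sum>v\<in>D_nbhd V A D u. f v)"

definition D_antimagic :: "'a set \<Rightarrow> ('a \<times> 'a) set \<Rightarrow> nat set \<Rightarrow> bool" where
  "D_antimagic V A D \<longleftrightarrow> D \<noteq> {} \<and> D \<subseteq> {0..max_dist V A} \<and>
     (\<exists>f. bij_betw f V {1..card V} \<and> inj_on (D_weight V A D f) V)"

definition is_source :: "('a \<times> 'a) set \<Rightarrow> 'a \<Rightarrow> bool" where
  "is_source A c \<longleftrightarrow> (\<nexists>v. (v, c) \<in> A)"

definition is_sink :: "('a \<times> 'a) set \<Rightarrow> 'a \<Rightarrow> bool" where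
  "is_sink A c \<longleftrightarrow> (\<nexists>v. (c, v) \<in> A)"

text \<open>Orientation of the star K_{1,n}: center 0, leaves 1..n; out i means the
  edge is oriented from the center to leaf i, otherwise from leaf i to the center.\<close>
definition star_arcs :: "nat \<Rightarrow> (nat \<Rightarrow> bool) \<Rightarrow> (nat \<times> nat) set" where
  "star_arcs n out = {(0, i) | i. 1 \<le> i \<and> i \<le> n \<and> out i} \<union> {(i, 0) | i. 1 \<le> i \<and> i \<le> n \<and> \<not> out i}"

text \<open>Disjoint union of m copies: vertex (j, a) is vertex a of copy j.\<close>
definition mstar_verts :: "nat \<Rightarrow> nat \<Rightarrow> (nat \<times> nat) set" where
  "mstar_verts m n = {..<m} \<times> {0..n}"

definition mstar_arcs :: "nat \<Rightarrow> nat \<Rightarrow> (nat \<Rightarrow> bool) \<Rightarrow> ((nat \<times> nat) \<times> (nat \<times> nat)) set" where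
  "mstar_arcs m n out = {((j, a), (j, b)) | j a b. j < m \<and> (a, b) \<in> star_arcs n out}"

end

theory Submission
  imports Defs
begin

(* Every arc of m K_{1,n} joins a leaf to its centre, so the only distances are 0, 1 and 2, and
   distance 2 occurs (from an in-leaf to an out-leaf of the same copy) exactly when the centres
   are neither sinks nor sources; this is precisely when {0, 2} and {0, 1, 2} are admissible
   distance sets.  For the labelling, the out-leaves receive the smallest labels, then the
   centres, then the in-leaves copy by copy.  Every {0, 2}- and {0, 1, 2}-weight is the label of
   the vertex plus a correction that is weakly increasing in that label, so distinct labels give
   distinct weights. *)

lemma has_dist_0_iff: "has_dist A u v 0 \<longleftrightarrow> u = v"
  by (simp add: has_dist_def)

lemma has_dist_1_iff: "has_dist A u v 1 \<longleftrightarrow> (u, v) \<in> A \<and> u \<noteq> v"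
  by (auto simp: has_dist_def)

lemma has_dist_2_iff: "has_dist A u v 2 \<longleftrightarrow> (u, v) \<in> A ^^ 2 \<and> (u, v) \<notin> A \<and> u \<noteq> v"
  by (auto simp: has_dist_def numeral_2_eq_2 less_Suc_eq)

lemma has_dist_less_if_relpow_empty:
  assumes "A ^^ b = {}" and "has_dist A u v k"
  shows "k < b"
proof (rule ccontr)
  assume "\<not> k < b"
  then have "A ^^ k = A ^^ b O A ^^ (k - b)"
    by (simp flip: relpow_add)
  with assms show False
    by (simp add: has_dist_def)
qed

lemma finite_distances_if_relpow_empty:
  "A ^^ b = {} \<Longrightarrow> finite {k. \<exists>u\<in>V. \<exists>v\<in>V. has_dist A u v k}"
  by (rule finite_subset[of _ "{..<b}"]) (auto dest: has_dist_less_if_relpow_empty)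

lemma le_max_dist:
  assumes "A ^^ b = {}" and "u \<in> V" "v \<in> V" "has_dist A u v k"
  shows "k \<le> max_dist V A"
  unfolding max_dist_def using assms by (intro Max_ge finite_distances_if_relpow_empty) auto

lemma max_dist_attained:
  assumes "A ^^ b = {}" and "V \<noteq> {}"
  obtains u v where "u \<in> V" "v \<in> V" "has_dist A u v (max_dist V A)"
proof -
  obtain x where "x \<in> V"
    using assms(2) by blast
  then have "0 \<in> {k. \<exists>u\<in>V. \<exists>v\<in>V. has_dist A u v k}"
    by (auto simp: has_dist_0_iff)
  then have "max_dist V A \<in> {k. \<exists>u\<in>V. \<exists>v\<in>V. has_dist A u v k}"
    unfolding max_dist_def using assms(1)
    by (intro Max_in finite_distances_if_relpow_empty) auto
  with that show ?thesis
    by blast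
qed

definition out_leaves :: "nat \<Rightarrow> (nat \<Rightarrow> bool) \<Rightarrow> nat set" where
  "out_leaves n out = {a \<in> {1..n}. out a}"

definition in_leaves :: "nat \<Rightarrow> (nat \<Rightarrow> bool) \<Rightarrow> nat set" where
  "in_leaves n out = {a \<in> {1..n}. \<not> out a}"

lemmas leaves_defs = out_leaves_def in_leaves_def

lemma finite_leaves [simp]: "finite (out_leaves n out)" "finite (in_leaves n out)"
  by (simp_all add: leaves_defs)

lemma zero_notin_leaves [simp]: "0 \<notin> out_leaves n out" "0 \<notin> in_leaves n out"
  by (simp_all add: leaves_defs)

lemma card_out_leaves_add_card_in_leaves: "card (out_leaves n out) + card (in_leaves n out) = n"
proof -
  have "out_leaves n out \<union> in_leaves n out = {1..n}" "out_leaves n out \<inter> in_leaves n out = {}"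
    by (auto simp: leaves_defs)
  then show ?thesis
    by (metis card_Un_disjoint card_atLeastAtMost diff_Suc_1 finite_leaves)
qed

lemma leaf_cases:
  assumes "a \<le> n"
  obtains "a = 0" | "a \<in> out_leaves n out" | "a \<in> in_leaves n out"
  using assms by (force simp: leaves_defs)

lemma mem_mstar_verts [simp]: "(j, a) \<in> mstar_verts m n \<longleftrightarrow> j < m \<and> a \<le> n"
  by (simp add: mstar_verts_def)

lemma card_mstar_verts: "card (mstar_verts m n) = m * (n + 1)"
  by (simp add: mstar_verts_def card_cartesian_product)

lemma mstar_arc_iff:
  "((j, a), (j', b)) \<in> mstar_arcs m n out \<longleftrightarrow>
     j' = j \<and> j < m \<and> (a = 0 \<and> b \<in> out_leaves n out \<or> a \<in> in_leaves n out \<and> b = 0)"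
  by (auto simp: mstar_arcs_def star_arcs_def leaves_defs)

lemma mstar_arcs_relpow_2_iff:
  "((j, a), (j', b)) \<in> mstar_arcs m n out ^^ 2 \<longleftrightarrow>
     j' = j \<and> j < m \<and> a \<in> in_leaves n out \<and> b \<in> out_leaves n out"
  by (auto simp: numeral_2_eq_2 relcomp_unfold mstar_arc_iff leaves_defs)

lemma mstar_arcs_relpow_3: "mstar_arcs m n out ^^ 3 = {}"
  by (auto simp: numeral_3_eq_3 relcomp_unfold mstar_arc_iff leaves_defs)

lemma mstar_has_dist_iff:
  "has_dist (mstar_arcs m n out) u v k \<longleftrightarrow>
     k = 0 \<and> u = v \<or> k = 1 \<and> (u, v) \<in> mstar_arcs m n out \<or>
     k = 2 \<and> (u, v) \<in> mstar_arcs m n out ^^ 2"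
proof -
  consider "k = 0" | "k = 1" | "k = 2" | "3 \<le> k"
    by linarith
  then show ?thesis
  proof cases
    case 1
    then show ?thesis
      by (simp add: has_dist_0_iff)
  next
    case 2
    then show ?thesis
      unfolding \<open>k = 1\<close> has_dist_1_iff by (cases u) (auto simp: mstar_arc_iff leaves_defs)
  next
    case 3
    then show ?thesis
      unfolding \<open>k = 2\<close> has_dist_2_iff
      by (cases u; cases v) (auto simp: mstar_arcs_relpow_2_iff mstar_arc_iff leaves_defs)
  next
    case 4
    then have "\<not> has_dist (mstar_arcs m n out) u v k"
      using has_dist_less_if_relpow_empty[OF mstar_arcs_relpow_3] not_less by blast
    with 4 show ?thesis
      by simp
  qed
qed

lemma D_nbhd_mstar_02:
  assumes "j < m" "a \<le> n"
  shows "D_nbhd (mstar_verts m n) (mstar_arcs m n out) {0, 2} (j, a) =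
    insert (j, a) (if a \<in> in_leaves n out then Pair j ` out_leaves n out else {})"
  using assms by (auto simp: D_nbhd_def mstar_has_dist_iff mstar_arcs_relpow_2_iff leaves_defs)

lemma D_nbhd_mstar_012:
  assumes "j < m" "a \<le> n"
  shows "D_nbhd (mstar_verts m n) (mstar_arcs m n out) {0, 1, 2} (j, a) =
    insert (j, a) (if a = 0 then Pair j ` out_leaves n out
      else if a \<in> in_leaves n out then insert (j, 0) (Pair j ` out_leaves n out) else {})"
  using assms
  by (auto simp: D_nbhd_def mstar_has_dist_iff mstar_arcs_relpow_2_iff mstar_arc_iff leaves_defs)

lemma sum_insert_Pair_image:
  assumes "finite B" "a \<notin> B"
  shows "(\<Sum>v\<in>insert (j, a) (Pair j ` B). f v) = f (j, a) + (\<Sum>b\<in>B. f (j, b))"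
  using assms by (simp add: image_iff sum.reindex inj_on_def)

lemma D_weight_mstar_02:
  assumes "j < m" "a \<le> n"
  shows "D_weight (mstar_verts m n) (mstar_arcs m n out) {0, 2} f (j, a) =
    f (j, a) + (if a \<in> in_leaves n out then \<Sum>b\<in>out_leaves n out. f (j, b) else 0)"
proof -
  have "a \<notin> out_leaves n out" if "a \<in> in_leaves n out"
    using that by (simp add: leaves_defs)
  then show ?thesis
    unfolding D_weight_def D_nbhd_mstar_02[OF assms] by (simp add: sum_insert_Pair_image)
qed

lemma D_weight_mstar_012:
  assumes "j < m" "a \<le> n"
  shows "D_weight (mstar_verts m n) (mstar_arcs m n out) {0, 1, 2} f (j, a) =
    f (j, a) + (if a = 0 then \<Sum>b\<in>out_leaves n out. f (j, b)
      else if a \<in> in_leaves n out then f (j, 0) + (\<Sum>b\<in>out_leaves n out. f (j, b)) else 0)"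
proof -
  have "(j, a) \<notin> insert (j, 0) (Pair j ` out_leaves n out)" if "a \<in> in_leaves n out"
    using that by (auto simp: leaves_defs)
  then show ?thesis
    unfolding D_weight_def D_nbhd_mstar_012[OF assms] by (simp add: sum_insert_Pair_image)
qed

lemma centre_is_sink_iff: "j < m \<Longrightarrow> is_sink (mstar_arcs m n out) (j, 0) \<longleftrightarrow> out_leaves n out = {}"
  by (auto simp: is_sink_def mstar_arc_iff leaves_defs)

lemma centre_is_source_iff: "j < m \<Longrightarrow> is_source (mstar_arcs m n out) (j, 0) \<longleftrightarrow> in_leaves n out = {}"
  by (auto simp: is_source_def mstar_arc_iff leaves_defs)

lemma two_le_max_dist_mstar_iff:
  assumes "0 < m"
  shows "2 \<le> max_dist (mstar_verts m n) (mstar_arcs m n out) \<longleftrightarrow>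
    out_leaves n out \<noteq> {} \<and> in_leaves n out \<noteq> {}"
proof
  assume le: "2 \<le> max_dist (mstar_verts m n) (mstar_arcs m n out)"
  have "(0, 0) \<in> mstar_verts m n"
    using assms by simp
  then obtain u v
    where "has_dist (mstar_arcs m n out) u v (max_dist (mstar_verts m n) (mstar_arcs m n out))"
    using max_dist_attained[OF mstar_arcs_relpow_3] by blast
  with le have "(u, v) \<in> mstar_arcs m n out ^^ 2"
    unfolding mstar_has_dist_iff by linarith
  then show "out_leaves n out \<noteq> {} \<and> in_leaves n out \<noteq> {}"
    by (cases u; cases v) (auto simp: mstar_arcs_relpow_2_iff)
next
  assume "out_leaves n out \<noteq> {} \<and> in_leaves n out \<noteq> {}"
  then obtain a b where a: "a \<in> in_leaves n out" and b: "b \<in> out_leaves n out"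
    by blast
  then have "has_dist (mstar_arcs m n out) (0, a) (0, b) 2"
    using assms by (simp add: mstar_has_dist_iff mstar_arcs_relpow_2_iff)
  moreover have "(0, a) \<in> mstar_verts m n" "(0, b) \<in> mstar_verts m n"
    using assms a b by (auto simp: leaves_defs)
  ultimately show "2 \<le> max_dist (mstar_verts m n) (mstar_arcs m n out)"
    using le_max_dist[OF mstar_arcs_relpow_3] by blast
qed

lemma inj_on_add_monotone:
  fixes f g :: "'a \<Rightarrow> 'b::linordered_cancel_ab_semigroup_add"
  assumes "inj_on f A" and "\<And>u v. u \<in> A \<Longrightarrow> v \<in> A \<Longrightarrow> f u < f v \<Longrightarrow> g u \<le> g v"
  shows "inj_on (\<lambda>x. f x + g x) A"
proof (rule inj_onI)
  fix u v
  assume "u \<in> A" "v \<in> A" and eq: "f u + g u = f v + g v"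
  have "\<not> f u < f v" "\<not> f v < f u"
    using add_less_le_mono assms(2) \<open>u \<in> A\<close> \<open>v \<in> A\<close> eq by (metis less_irrefl)+
  then have "f u = f v"
    by simp
  with assms(1) \<open>u \<in> A\<close> \<open>v \<in> A\<close> show "u = v"
    by (simp add: inj_on_eq_iff)
qed

lemma add_mult_eqD:
  fixes s s' k t t' :: nat
  assumes "s < k" "s' < k" "s + k * t = s' + k * t'"
  shows "s = s' \<and> t = t'"
proof -
  have "s = s'"
    using arg_cong[OF assms(3), of "\<lambda>x. x mod k"] assms(1,2) by simp
  with assms show ?thesis
    by simp
qed

locale mstar_labelling =
  fixes m n :: nat and out :: "nat \<Rightarrow> bool" and \<sigma> \<tau> :: "nat \<Rightarrow> nat"
  assumes bij_\<sigma>: "bij_betw \<sigma> (out_leaves n out) {0..<card (out_leaves n out)}"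
    and bij_\<tau>: "bij_betw \<tau> (in_leaves n out) {0..<card (in_leaves n out)}"
begin

abbreviation "V \<equiv> mstar_verts m n"
abbreviation "A \<equiv> mstar_arcs m n out"
abbreviation "p \<equiv> card (out_leaves n out)"
abbreviation "q \<equiv> card (in_leaves n out)"

(* The copy index varies fastest on the out-leaves, so the out-sums of two copies differ by less
   than m p, hence by less than any centre label (out_sum_le_centre). *)
definition label :: "nat \<times> nat \<Rightarrow> nat" where
  "label = (\<lambda>(j, a). if a = 0 then m * p + 1 + j
     else if out a then 1 + j + m * \<sigma> a
     else m * (p + 1) + 1 + j * q + \<tau> a)"

definition tier :: "nat \<Rightarrow> nat" where
  "tier a = (if a = 0 then 1 else if out a then 0 else 2)"

lemma label_centre: "label (j, 0) = m * p + 1 + j"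
  by (simp add: label_def)

lemma label_out: "a \<in> out_leaves n out \<Longrightarrow> label (j, a) = 1 + j + m * \<sigma> a"
  by (simp add: label_def leaves_defs)

lemma label_in: "a \<in> in_leaves n out \<Longrightarrow> label (j, a) = m * (p + 1) + 1 + j * q + \<tau> a"
  by (simp add: label_def leaves_defs)

lemma tier_simps [simp]:
  "tier 0 = 1" "a \<in> out_leaves n out \<Longrightarrow> tier a = 0" "a \<in> in_leaves n out \<Longrightarrow> tier a = 2"
  by (simp_all add: tier_def leaves_defs)

lemma \<sigma>_less: "a \<in> out_leaves n out \<Longrightarrow> \<sigma> a < p"
  using bij_betwE[OF bij_\<sigma>] by auto

lemma \<tau>_less: "a \<in> in_leaves n out \<Longrightarrow> \<tau> a < q"
  using bij_betwE[OF bij_\<tau>] by auto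

lemma label_out_le:
  assumes "j < m" "a \<in> out_leaves n out"
  shows "label (j, a) \<le> m * p"
proof -
  have "label (j, a) \<le> m * (\<sigma> a + 1)"
    using assms by (simp add: label_out)
  also have "\<dots> \<le> m * p"
    using \<sigma>_less[OF assms(2)] by (intro mult_le_mono2) simp
  finally show ?thesis .
qed

lemma label_in_le:
  assumes "j < m" "a \<in> in_leaves n out"
  shows "label (j, a) \<le> m * (n + 1)"
proof -
  have "label (j, a) \<le> m * (p + 1) + (j + 1) * q"
    using \<tau>_less[OF assms(2)] by (simp add: label_in[OF assms(2)])
  also have "\<dots> \<le> m * (p + 1) + m * q"
    using assms(1) by (intro add_left_mono mult_le_mono1) simp
  also have "\<dots> = m * (p + q + 1)"
    by (simp add: algebra_simps)
  also have "\<dots> = m * (n + 1)"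
    by (simp only: card_out_leaves_add_card_in_leaves)
  finally show ?thesis .
qed

lemma label_less_if_tier_less:
  assumes "(j, a) \<in> V" "(j', b) \<in> V" "tier a < tier b"
  shows "label (j, a) < label (j', b)"
proof -
  have "j < m" "j' < m" "a \<le> n" "b \<le> n"
    using assms(1,2) by auto
  then show ?thesis
    using assms(3)
    by (cases rule: leaf_cases[OF \<open>a \<le> n\<close>, where out = out];
        cases rule: leaf_cases[OF \<open>b \<le> n\<close>, where out = out])
      (auto simp: label_centre label_in dest: label_out_le)
qed

lemma tier_le_if_label_less:
  "(j, a) \<in> V \<Longrightarrow> (j', b) \<in> V \<Longrightarrow> label (j, a) < label (j', b) \<Longrightarrow> tier a \<le> tier b"
  using label_less_if_tier_less[of j' b j a] by fastforce

lemma inj_on_label: "inj_on label V"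
proof (rule inj_onI, clarify)
  fix j a j' b
  assume u: "(j, a) \<in> V" and v: "(j', b) \<in> V" and eq: "label (j, a) = label (j', b)"
  have "tier a = tier b"
    using label_less_if_tier_less[OF u v] label_less_if_tier_less[OF v u] eq by fastforce
  have "j = j' \<and> a = b" if "a \<in> out_leaves n out" "b \<in> out_leaves n out"
  proof -
    have "j + m * \<sigma> a = j' + m * \<sigma> b"
      using eq that by (simp add: label_out)
    then have "j = j' \<and> \<sigma> a = \<sigma> b"
      using u v by (intro add_mult_eqD) auto
    then show ?thesis
      using that bij_betw_imp_inj_on[OF bij_\<sigma>] by (auto dest: inj_onD)
  qed
  moreover have "j = j' \<and> a = b" if "a \<in> in_leaves n out" "b \<in> in_leaves n out"
  proof -
    have "\<tau> a + q * j = \<tau> b + q * j'"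
      using eq that by (simp add: label_in mult.commute)
    moreover have "\<tau> a < q" "\<tau> b < q"
      using that by (simp_all add: \<tau>_less)
    ultimately have "\<tau> a = \<tau> b \<and> j = j'"
      by (intro add_mult_eqD)
    then show ?thesis
      using that bij_betw_imp_inj_on[OF bij_\<tau>] by (auto dest: inj_onD)
  qed
  moreover have "a \<le> n" "b \<le> n"
    using u v by auto
  ultimately show "j = j' \<and> a = b"
    using \<open>tier a = tier b\<close> eq
    by (cases rule: leaf_cases[OF \<open>a \<le> n\<close>, where out = out];
        cases rule: leaf_cases[OF \<open>b \<le> n\<close>, where out = out])
      (auto simp: label_centre)
qed

lemma label_in_range:
  assumes "(j, a) \<in> V"
  shows "label (j, a) \<in> {1..m * (n + 1)}"
proof -
  have "j < m" "a \<le> n"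
    using assms by auto
  have "p \<le> n"
    using card_out_leaves_add_card_in_leaves[of n out] by linarith
  then have bound: "m * p + m \<le> m * (n + 1)"
    using mult_le_mono2[of "p + 1" "n + 1" m] by simp
  show ?thesis
  proof (cases rule: leaf_cases[OF \<open>a \<le> n\<close>, where out = out])
    case 1
    with \<open>j < m\<close> bound show ?thesis
      unfolding \<open>a = 0\<close> atLeastAtMost_iff label_centre by linarith
  next
    case 2
    with label_out_le[OF \<open>j < m\<close> 2] bound show ?thesis
      unfolding atLeastAtMost_iff label_out[OF 2] by linarith
  next
    case 3
    with label_in_le[OF \<open>j < m\<close> 3] show ?thesis
      by (simp add: label_in)
  qed
qed

lemma bij_betw_label: "bij_betw label V {1..card V}"
proof -
  have "label ` V \<subseteq> {1..card V}"
    using label_in_range by (auto simp: card_mstar_verts)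
  moreover have "card (label ` V) = card V"
    using inj_on_label by (rule card_image)
  ultimately have "label ` V = {1..card V}"
    by (intro card_subset_eq) auto
  with inj_on_label show ?thesis
    by (rule bij_betw_imageI)
qed

definition out_sum :: "nat \<Rightarrow> nat" where
  "out_sum j = (\<Sum>b\<in>out_leaves n out. label (j, b))"

lemma out_sum_mono: "j \<le> j' \<Longrightarrow> out_sum j \<le> out_sum j'"
  unfolding out_sum_def by (intro sum_mono) (simp add: label_out)

lemma out_sum_le_centre:
  assumes "j < m"
  shows "out_sum j \<le> label (j', 0) + out_sum j'"
proof -
  have "out_sum j \<le> (\<Sum>b\<in>out_leaves n out. label (j', b) + j)"
    unfolding out_sum_def by (intro sum_mono) (simp add: label_out)
  also have "\<dots> = out_sum j' + p * j"
    by (simp add: out_sum_def sum.distrib)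
  also have "\<dots> \<le> out_sum j' + m * p"
    using assms by simp
  also have "\<dots> \<le> label (j', 0) + out_sum j'"
    by (simp add: label_centre)
  finally show ?thesis .
qed

lemma label_less_in_leaf:
  assumes "(j, a) \<in> V" "(j', b) \<in> V" "a \<in> in_leaves n out" "label (j, a) < label (j', b)"
  shows "b \<in> in_leaves n out \<and> j \<le> j'"
proof -
  have "2 \<le> tier b"
    using tier_le_if_label_less[OF assms(1,2,4)] assms(3) by simp
  then have b: "b \<in> in_leaves n out"
    using assms(2) by (auto simp: tier_def leaves_defs split: if_splits)
  have "(\<tau> a + q * j) div q \<le> (\<tau> b + q * j') div q"
    using assms(4) by (intro div_le_mono) (simp add: label_in assms(3) b mult.commute)
  moreover have "\<tau> a < q" "\<tau> b < q"
    using assms(3) b by (simp_all add: \<tau>_less)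
  moreover from this have "q \<noteq> 0"
    by linarith
  ultimately show ?thesis
    using b by simp
qed

lemma inj_on_D_weight_02: "inj_on (D_weight V A {0, 2} label) V"
proof -
  define e :: "nat \<times> nat \<Rightarrow> nat" where "e = (\<lambda>(j, a). if a \<in> in_leaves n out then out_sum j else 0)"
  have "e (j, a) \<le> e (j', b)"
    if u: "(j, a) \<in> V" and v: "(j', b) \<in> V" and less: "label (j, a) < label (j', b)" for j a j' b
    using label_less_in_leaf[OF u v _ less] out_sum_mono by (auto simp: e_def)
  then have "inj_on (\<lambda>u. label u + e u) V"
    by (intro inj_on_add_monotone[OF inj_on_label]) auto
  moreover have "D_weight V A {0, 2} label (j, a) = label (j, a) + e (j, a)" if "(j, a) \<in> V" for j a
    using that by (subst D_weight_mstar_02) (auto simp: e_def out_sum_def)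
  ultimately show ?thesis
    by (metis (no_types, lifting) inj_on_cong prod.collapse)
qed

lemma inj_on_D_weight_012: "inj_on (D_weight V A {0, 1, 2} label) V"
proof -
  define e :: "nat \<times> nat \<Rightarrow> nat" where
    "e = (\<lambda>(j, a). if a = 0 then out_sum j
       else if a \<in> in_leaves n out then label (j, 0) + out_sum j else 0)"
  have "e (j, a) \<le> e (j', b)"
    if u: "(j, a) \<in> V" and v: "(j', b) \<in> V" and less: "label (j, a) < label (j', b)" for j a j' b
  proof -
    have "a \<le> n" "b \<le> n" "j < m"
      using u v by auto
    then show ?thesis
      using tier_le_if_label_less[OF u v less] label_less_in_leaf[OF u v _ less] less
        out_sum_le_centre[OF \<open>j < m\<close>, of j']
      by (cases rule: leaf_cases[OF \<open>a \<le> n\<close>, where out = out];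
          cases rule: leaf_cases[OF \<open>b \<le> n\<close>, where out = out])
        (auto simp: e_def label_centre intro: out_sum_mono add_mono)
  qed
  then have "inj_on (\<lambda>u. label u + e u) V"
    by (intro inj_on_add_monotone[OF inj_on_label]) auto
  moreover have "D_weight V A {0, 1, 2} label (j, a) = label (j, a) + e (j, a)" if "(j, a) \<in> V" for j a
    using that by (subst D_weight_mstar_012) (auto simp: e_def out_sum_def)
  ultimately show ?thesis
    by (metis (no_types, lifting) inj_on_cong prod.collapse)
qed

end

lemma mstar_antimagic_labelling_exists:
  "\<exists>f. bij_betw f (mstar_verts m n) {1..card (mstar_verts m n)} \<and>
     inj_on (D_weight (mstar_verts m n) (mstar_arcs m n out) {0, 2} f) (mstar_verts m n) \<and>
     inj_on (D_weight (mstar_verts m n) (mstar_arcs m n out) {0, 1, 2} f) (mstar_verts m n)"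
proof -
  obtain \<sigma> where "bij_betw \<sigma> (out_leaves n out) {0..<card (out_leaves n out)}"
    using ex_bij_betw_finite_nat finite_leaves(1) by blast
  moreover obtain \<tau> where "bij_betw \<tau> (in_leaves n out) {0..<card (in_leaves n out)}"
    using ex_bij_betw_finite_nat finite_leaves(2) by blast
  ultimately interpret mstar_labelling m n out \<sigma> \<tau>
    by unfold_locales
  show ?thesis
    using bij_betw_label inj_on_D_weight_02 inj_on_D_weight_012 by blast
qed

theorem mainTheorem8:
  fixes m n :: nat and out :: "nat \<Rightarrow> bool"
  assumes "m \<ge> 2" and "n \<ge> 1"
  shows "(D_antimagic (mstar_verts m n) (mstar_arcs m n out) {0, 2} \<and>
          D_antimagic (mstar_verts m n) (mstar_arcs m n out) {0, 1, 2})
     \<longleftrightarrow> (\<forall>j<m. \<not> is_sink (mstar_arcs m n out) (j, 0) \<and> \<not> is_source (mstar_arcs m n out) (j, 0))"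
proof -
  have "0 < m"
    using assms(1) by simp
  have "(D_antimagic (mstar_verts m n) (mstar_arcs m n out) {0, 2} \<and>
         D_antimagic (mstar_verts m n) (mstar_arcs m n out) {0, 1, 2})
    \<longleftrightarrow> 2 \<le> max_dist (mstar_verts m n) (mstar_arcs m n out)"
    using mstar_antimagic_labelling_exists[of m n out] by (auto simp: D_antimagic_def)
  also have "\<dots> \<longleftrightarrow> out_leaves n out \<noteq> {} \<and> in_leaves n out \<noteq> {}"
    using \<open>0 < m\<close> by (rule two_le_max_dist_mstar_iff)
  also have "\<dots> \<longleftrightarrow> (\<forall>j<m. \<not> is_sink (mstar_arcs m n out) (j, 0) \<and> \<not> is_source (mstar_arcs m n out) (j, 0))"
    using \<open>0 < m\<close> centre_is_sink_iff[of _ m n out] centre_is_source_iff[of _ m n out] by blast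
  finally show ?thesis .
qed

end
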